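(* Let $R=\mathbb{Z}$ or $\mathbb{Z}[i]$ with fraction field $K$, let $1\leq k<n$, and let $A_0=(a_1|\dots|a_k)\in R^{n\times k}$ be a $k$-icube of norm $\lambda$. Then (1) the $R$-module $\Lambda=\{w\in R^n: a_j^*w=0 \text{ for } 1\leq j\leq k\}$ is free of rank $n-k$; (2) if $Q$ denotes the restriction of the standard form $(x,y)\mapsto x^*y$ to $\Lambda$ and $\mathrm{disc}(Q)$ the determinant of its Gram matrix with respect to an $R$-basis of $\Lambda$, then $\mathrm{disc}(Q)=\lambda^k/|d_k(A_0)|^2$.
   Context: A $k$-icube of norm $\lambda>0$ in $R^n$ is $(v_1|\dots|v_k)\in R^{n\times k}$ with $v_i^*v_j=\lambda$ if $i=j$ and $0$ otherwise ($v^*$ the conjugate transpose). $d_k(A_0)$ is the $k$-th determinantal divisor: the gcd of the $k\times k$ minors of $A_0$ (defined up to a unit; $|d_k(A_0)|^2$ is well defined). *)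

theory Defs
  imports "Jordan_Normal_Form.Determinant" "Jordan_Normal_Form.DL_Submatrix"
begin

definition rat_ints :: "complex set" where
  "rat_ints = {z. Re z \<in> \<int> \<and> Im z = 0}"

definition gauss_ints :: "complex set" where
  "gauss_ints = {z. Re z \<in> \<int> \<and> Im z \<in> \<int>}"

definition hinner :: "complex vec \<Rightarrow> complex vec \<Rightarrow> complex" where
  "hinner v w = (\<Sum>i<dim_vec v. cnj (v $ i) * w $ i)"

definition vec_over :: "complex set \<Rightarrow> nat \<Rightarrow> complex vec set" where
  "vec_over R n = {v \<in> carrier_vec n. \<forall>i<n. v $ i \<in> R}"

definition icube :: "complex set \<Rightarrow> nat \<Rightarrow> nat \<Rightarrow> real \<Rightarrow> complex mat \<Rightarrow> bool" where
  "icube R n k lam A \<longleftrightarrow> A \<in> carrier_mat n k \<and> (\<forall>i<n. \<forall>j<k. A $$ (i,j) \<in> R) \<and> lam > 0 \<and>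
     (\<forall>i<k. \<forall>j<k. hinner (col A i) (col A j) = (if i = j then complex_of_real lam else 0))"

definition R_dvd :: "complex set \<Rightarrow> complex \<Rightarrow> complex \<Rightarrow> bool" where
  "R_dvd R a b \<longleftrightarrow> (\<exists>c\<in>R. b = a * c)"

definition minors :: "nat \<Rightarrow> complex mat \<Rightarrow> complex set" where
  "minors k A = {det (submatrix A I {0..<k}) | I. I \<subseteq> {0..<dim_row A} \<and> card I = k}"

definition is_det_divisor :: "complex set \<Rightarrow> nat \<Rightarrow> complex mat \<Rightarrow> complex \<Rightarrow> bool" where
  "is_det_divisor R k A d \<longleftrightarrow> d \<in> R \<and> (\<forall>m\<in>minors k A. R_dvd R d m) \<and>
     (\<forall>e\<in>R. (\<forall>m\<in>minors k A. R_dvd R e m) \<longrightarrow> R_dvd R e d)"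

definition orth_lattice :: "complex set \<Rightarrow> nat \<Rightarrow> nat \<Rightarrow> complex mat \<Rightarrow> complex vec set" where
  "orth_lattice R n k A = {w \<in> vec_over R n. \<forall>j<k. hinner (col A j) w = 0}"

definition is_R_basis :: "complex set \<Rightarrow> nat \<Rightarrow> complex vec set \<Rightarrow> complex vec list \<Rightarrow> bool" where
  "is_R_basis R n L bs \<longleftrightarrow> set bs \<subseteq> L \<and>
     (\<forall>w\<in>L. \<exists>!c. (\<forall>i<length bs. c i \<in> R) \<and> (\<forall>i\<ge>length bs. c i = 0) \<and>
        w = finsum_vec TYPE(complex) n (\<lambda>i. c i \<cdot>\<^sub>v bs ! i) {0..<length bs})"

definition gram :: "complex vec list \<Rightarrow> complex mat" where
  "gram bs = mat (length bs) (length bs) (\<lambda>(i,j). hinner (bs ! i) (bs ! j))"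

end

theory Submission
  imports Defs
begin

text \<open>
  Since R is Euclidean, unimodular column operations bring \<open>A\<^sup>*\<close> to the shape
  \<open>A\<^sup>* V = (H | 0)\<close> with \<open>H\<close> of size k \<times> k. The last n - k columns of \<open>V\<close> are then an
  R-basis of \<open>\<Lambda>\<close>, and two bases differ by a matrix whose determinant is a unit, hence of
  norm 1, so \<open>disc(Q)\<close> does not depend on the basis.
  Writing \<open>W = V\<^sup>-\<^sup>1\<close> and \<open>W\<^sub>1\<close> for its first k rows, \<open>A\<^sup>* = H W\<^sub>1\<close>: every k \<times> k minor
  of \<open>A = W\<^sub>1\<^sup>* H\<^sup>*\<close> is divisible by \<open>det H\<^sup>*\<close>, while \<open>H\<^sup>* = V\<^sub>1\<^sup>* A\<close> (\<open>V\<^sub>1\<close> the first k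
  columns of \<open>V\<close>) has determinant divisible by \<open>d\<^sub>k(A)\<close>; so \<open>|det H| = |d\<^sub>k(A)|\<close>.
  Finally, the Gram matrix of \<open>(A | V\<^sub>2)\<close>, \<open>V\<^sub>2\<close> the last n - k columns of \<open>V\<close>, is block
  diagonal with blocks \<open>\<lambda> I\<^sub>k\<close> and the Gram matrix of the basis, and its determinant is
  \<open>|det (A | V\<^sub>2)|\<^sup>2 = |det (W\<^sub>1 A)|\<^sup>2 = (\<lambda>\<^sup>k / |det H|)\<^sup>2\<close> because \<open>H (W\<^sub>1 A) = A\<^sup>* A = \<lambda> I\<^sub>k\<close>.
\<close>

section \<open>Euclidean subrings of the complex numbers\<close>

locale euclidean_subring =
  fixes R :: "complex set"
  assumes zero_mem [simp, intro]: "0 \<in> R"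
    and one_mem [simp, intro]: "1 \<in> R"
    and add_mem [intro]: "a \<in> R \<Longrightarrow> b \<in> R \<Longrightarrow> a + b \<in> R"
    and mult_mem [intro]: "a \<in> R \<Longrightarrow> b \<in> R \<Longrightarrow> a * b \<in> R"
    and uminus_mem [intro]: "a \<in> R \<Longrightarrow> - a \<in> R"
    and cnj_mem [intro]: "a \<in> R \<Longrightarrow> cnj a \<in> R"
    and norm_square_Nats: "a \<in> R \<Longrightarrow> (cmod a)\<^sup>2 \<in> \<nat>"
    and euclidean_division: "a \<in> R \<Longrightarrow> b \<in> R \<Longrightarrow> b \<noteq> 0 \<Longrightarrow> \<exists>q\<in>R. cmod (a - q * b) < cmod b"

lemma norm_sub_mult_less_of_norm_quotient:
  assumes "b \<noteq> 0" "cmod (a / b - q) < 1"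
  shows "cmod (a - q * b) < cmod b"
proof -
  have "a - q * b = (a / b - q) * b" using assms(1) by (simp add: field_simps)
  then show ?thesis using assms by (simp add: norm_mult)
qed

lemma round_error_le: "\<bar>x - of_int (round x)\<bar> \<le> (1/2 :: real)"
  using of_int_round_ge[of x] of_int_round_le[of x] by linarith

lemma euclidean_subring_rat_ints: "euclidean_subring rat_ints"
proof
  fix a b assume a: "a \<in> rat_ints" and b: "b \<in> rat_ints" and "b \<noteq> 0"
  define q where "q = complex_of_int (round (Re (a / b)))"
  have "Im (a / b) = 0" using a b by (simp add: rat_ints_def Im_divide)
  then have "cmod (a / b - q) = \<bar>Re (a / b) - of_int (round (Re (a / b)))\<bar>"
    by (simp add: q_def cmod_def)
  also have "\<dots> < 1" using round_error_le[of "Re (a / b)"] by simp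
  finally have "cmod (a - q * b) < cmod b"
    using \<open>b \<noteq> 0\<close> by (rule norm_sub_mult_less_of_norm_quotient[rotated])
  moreover have "q \<in> rat_ints" by (simp add: q_def rat_ints_def)
  ultimately show "\<exists>q\<in>rat_ints. cmod (a - q * b) < cmod b" by blast
next
  fix a assume "a \<in> rat_ints"
  then show "(cmod a)\<^sup>2 \<in> \<nat>"
    by (simp add: rat_ints_def cmod_power2 Nats_altdef2)
qed (auto simp: rat_ints_def)

lemma euclidean_subring_gauss_ints: "euclidean_subring gauss_ints"
proof
  fix a b :: complex assume "b \<noteq> 0"
  define z where "z = a / b"
  define q where "q = Complex (of_int (round (Re z))) (of_int (round (Im z)))"
  have "(cmod (z - q))\<^sup>2 = (Re z - of_int (round (Re z)))\<^sup>2 + (Im z - of_int (round (Im z)))\<^sup>2"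
    by (simp add: q_def cmod_power2)
  also have "\<dots> \<le> (1/2)\<^sup>2 + (1/2)\<^sup>2"
    using round_error_le[of "Re z"] round_error_le[of "Im z"]
    by (intro add_mono) (simp_all add: abs_le_square_iff[symmetric])
  also have "\<dots> < 1\<^sup>2" by (simp add: power2_eq_square)
  finally have "cmod (z - q) < 1" by (rule power_less_imp_less_base) simp
  then have "cmod (a - q * b) < cmod b"
    using \<open>b \<noteq> 0\<close> unfolding z_def by (rule norm_sub_mult_less_of_norm_quotient[rotated])
  moreover have "q \<in> gauss_ints" by (simp add: q_def gauss_ints_def)
  ultimately show "\<exists>q\<in>gauss_ints. cmod (a - q * b) < cmod b" by blast
next
  fix a assume "a \<in> gauss_ints"
  then show "(cmod a)\<^sup>2 \<in> \<nat>"
    by (simp add: gauss_ints_def cmod_power2 Nats_altdef2)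
qed (auto simp: gauss_ints_def)

context euclidean_subring
begin

lemma diff_mem [intro]: "a \<in> R \<Longrightarrow> b \<in> R \<Longrightarrow> a - b \<in> R"
  using add_mem[of a "- b"] by auto

lemma sum_mem [intro]: "(\<And>x. x \<in> S \<Longrightarrow> f x \<in> R) \<Longrightarrow> sum f S \<in> R"
  by (induction S rule: infinite_finite_induct) auto

lemma prod_mem [intro]: "(\<And>x. x \<in> S \<Longrightarrow> f x \<in> R) \<Longrightarrow> prod f S \<in> R"
  by (induction S rule: infinite_finite_induct) auto

lemma power_mem [intro]: "a \<in> R \<Longrightarrow> a ^ m \<in> R"
  by (induction m) auto

lemma sign_mem [intro]: "of_int (sign p) \<in> R"
  by (auto simp: sign_def)

lemma norm_induct [consumes 1, case_names less]:
  assumes "a \<in> R"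
    and "\<And>a. a \<in> R \<Longrightarrow> (\<And>b. b \<in> R \<Longrightarrow> cmod b < cmod a \<Longrightarrow> P b) \<Longrightarrow> P a"
  shows "P a"
  using assms(1)
proof (induction "nat \<lfloor>(cmod a)\<^sup>2\<rfloor>" arbitrary: a rule: less_induct)
  case less
  have "nat \<lfloor>(cmod b)\<^sup>2\<rfloor> < nat \<lfloor>(cmod a)\<^sup>2\<rfloor>" if "b \<in> R" "cmod b < cmod a" for b
  proof -
    have "(cmod b)\<^sup>2 < (cmod a)\<^sup>2" using that(2) by (simp add: power_strict_mono)
    then show ?thesis
      using norm_square_Nats[OF that(1)] norm_square_Nats[OF less.prems] by (auto elim!: Nats_cases)
  qed
  then show ?case using assms(2)[OF less.prems] less.hyps by blast
qed

lemma unit_norm_eq_1: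
  assumes "a \<in> R" "b \<in> R" "a * b = 1"
  shows "cmod a = 1"
proof -
  obtain m1 m2 :: nat where "(cmod a)\<^sup>2 = m1" "(cmod b)\<^sup>2 = m2"
    using norm_square_Nats assms(1,2) by (metis Nats_cases)
  moreover have "(cmod a)\<^sup>2 * (cmod b)\<^sup>2 = 1"
    using assms(3) by (metis norm_mult norm_one power_mult_distrib power_one)
  ultimately have "(cmod a)\<^sup>2 = 1"
    by (metis of_nat_1 of_nat_eq_iff of_nat_mult nat_1_eq_mult_iff)
  then show ?thesis by (simp add: power2_eq_1_iff) (smt (verit) norm_ge_zero)
qed

lemma R_dvd_refl: "a \<in> R \<Longrightarrow> R_dvd R a a"
  unfolding R_dvd_def by (rule bexI[of _ 1]) auto

lemma R_dvd_0: "R_dvd R a 0"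
  unfolding R_dvd_def by (rule bexI[of _ 0]) auto

lemma R_dvd_trans: "R_dvd R a b \<Longrightarrow> R_dvd R b c \<Longrightarrow> R_dvd R a c"
  unfolding R_dvd_def by (metis mult.assoc mult_mem)

lemma R_dvd_add: "R_dvd R a b \<Longrightarrow> R_dvd R a c \<Longrightarrow> R_dvd R a (b + c)"
  unfolding R_dvd_def by (metis add_mem distrib_left)

lemma R_dvd_mult_left: "R_dvd R a b \<Longrightarrow> c \<in> R \<Longrightarrow> R_dvd R a (c * b)"
  unfolding R_dvd_def by (metis mult_mem mult.left_commute)

lemma R_dvd_sum: "(\<And>x. x \<in> S \<Longrightarrow> R_dvd R a (f x)) \<Longrightarrow> R_dvd R a (sum f S)"
  by (induction S rule: infinite_finite_induct) (auto intro: R_dvd_add R_dvd_0)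

lemma bezout:
  assumes "b \<in> R" "a \<in> R"
  shows "\<exists>s\<in>R. \<exists>t\<in>R. R_dvd R (s * a + t * b) a \<and> R_dvd R (s * a + t * b) b"
  using assms
proof (induction b arbitrary: a rule: norm_induct)
  case (less b)
  show ?case
  proof (cases "b = 0")
    case True
    have "R_dvd R (1 * a + 0 * b) a" using R_dvd_refl[OF less.prems] by simp
    then show ?thesis using True by (intro bexI[of _ 1] bexI[of _ 0]) (simp_all add: R_dvd_0)
  next
    case False
    then obtain q where q: "q \<in> R" "cmod (a - q * b) < cmod b"
      using euclidean_division less.hyps less.prems by blast
    then have "a - q * b \<in> R" using less by blast
    then obtain s t where st: "s \<in> R" "t \<in> R"
      and dvd: "R_dvd R (s * b + t * (a - q * b)) b" "R_dvd R (s * b + t * (a - q * b)) (a - q * b)"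
      using less.IH[OF _ q(2)] less.hyps by blast
    have g: "s * b + t * (a - q * b) = t * a + (s - t * q) * b" by (simp add: algebra_simps)
    have "R_dvd R (t * a + (s - t * q) * b) a"
      using R_dvd_add[OF dvd(2) R_dvd_mult_left[OF dvd(1) q(1)]] unfolding g by simp
    moreover have "s - t * q \<in> R" using st q by blast
    ultimately show ?thesis using dvd(1) st(2) unfolding g by blast
  qed
qed

lemma finite_gcd_exists:
  assumes "finite S" "S \<subseteq> R"
  shows "\<exists>g\<in>R. (\<forall>m\<in>S. R_dvd R g m) \<and> (\<forall>e\<in>R. (\<forall>m\<in>S. R_dvd R e m) \<longrightarrow> R_dvd R e g)"
  using assms
proof (induction S rule: finite_induct)
  case empty
  then show ?case by (intro bexI[of _ 0]) (auto intro: R_dvd_0)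
next
  case (insert x S)
  then obtain g where g: "g \<in> R" "\<forall>m\<in>S. R_dvd R g m" "\<forall>e\<in>R. (\<forall>m\<in>S. R_dvd R e m) \<longrightarrow> R_dvd R e g"
    by auto
  obtain s t where st: "s \<in> R" "t \<in> R" "R_dvd R (s * g + t * x) g" "R_dvd R (s * g + t * x) x"
    using bezout[of x g] insert g by auto
  show ?case
  proof (intro bexI conjI ballI impI)
    show "R_dvd R (s * g + t * x) m" if "m \<in> insert x S" for m
      using that st g R_dvd_trans by auto
    show "R_dvd R e (s * g + t * x)" if "e \<in> R" "\<forall>m\<in>insert x S. R_dvd R e m" for e
      using that g st by (auto intro!: R_dvd_add R_dvd_mult_left)
  qed (use g st insert in auto)
qed

lemma associated_norm_eq:
  assumes "a \<in> R" "b \<in> R" "R_dvd R a b" "R_dvd R b a"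
  shows "cmod a = cmod b"
proof -
  obtain u v where uv: "u \<in> R" "v \<in> R" "b = a * u" "a = b * v"
    using assms(3,4) unfolding R_dvd_def by blast
  show ?thesis
  proof (cases "a = 0")
    case False
    have "a * (u * v) = a * 1" using uv(3,4) by (metis mult.assoc mult_1_right)
    then have "u * v = 1" using mult_left_cancel[OF False] by blast
    then show ?thesis using unit_norm_eq_1[OF uv(1,2)] uv(3) by (simp add: norm_mult)
  qed (simp add: uv(3))
qed

end

section \<open>Matrices over a subring\<close>

definition mat_over :: "complex set \<Rightarrow> nat \<Rightarrow> nat \<Rightarrow> complex mat set" where
  "mat_over R n m = {A \<in> carrier_mat n m. \<forall>i<n. \<forall>j<m. A $$ (i, j) \<in> R}"

definition unimodular :: "complex set \<Rightarrow> nat \<Rightarrow> complex mat \<Rightarrow> bool" where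
  "unimodular R n V \<longleftrightarrow> V \<in> mat_over R n n \<and> (\<exists>u\<in>R. det V * u = 1)"

lemma mat_overI [intro]:
  "A \<in> carrier_mat n m \<Longrightarrow> (\<And>i j. i < n \<Longrightarrow> j < m \<Longrightarrow> A $$ (i, j) \<in> R) \<Longrightarrow> A \<in> mat_over R n m"
  by (simp add: mat_over_def)

lemma mat_overD:
  assumes "A \<in> mat_over R n m"
  shows mat_over_carrier: "A \<in> carrier_mat n m"
    and mat_over_index: "i < n \<Longrightarrow> j < m \<Longrightarrow> A $$ (i, j) \<in> R"
  using assms by (auto simp: mat_over_def)

lemma unimodularD:
  assumes "unimodular R n V"
  shows unimodular_mat_over: "V \<in> mat_over R n n"
    and unimodular_carrier: "V \<in> carrier_mat n n"
  using assms by (auto simp: unimodular_def mat_over_def)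

context euclidean_subring
begin

lemma mult_mat_over:
  "A \<in> mat_over R n m \<Longrightarrow> B \<in> mat_over R m p \<Longrightarrow> A * B \<in> mat_over R n p"
  by (intro mat_overI) (auto simp: mat_over_def scalar_prod_def intro!: sum_mem mult_mem)

lemma mult_mat_vec_over:
  "A \<in> mat_over R n m \<Longrightarrow> v \<in> vec_over R m \<Longrightarrow> A *\<^sub>v v \<in> vec_over R n"
  by (auto simp: mat_over_def vec_over_def scalar_prod_def intro!: sum_mem mult_mem)

lemma one_mat_over: "1\<^sub>m n \<in> mat_over R n n"
  by auto

lemma det_mem:
  assumes "A \<in> mat_over R n n"
  shows "det A \<in> R"
proof -
  have "A $$ (i, p i) \<in> R" if "p permutes {0..<n}" "i < n" for p i
    using that assms by (meson atLeastLessThan_iff mat_over_index permutes_in_image zero_le)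
  then show ?thesis
    using mat_over_carrier[OF assms] unfolding det_def by (auto intro!: sum_mem prod_mem mult_mem)
qed

lemma unimodular_one: "unimodular R n (1\<^sub>m n)"
  unfolding unimodular_def by (auto intro: one_mat_over)

lemma unimodular_mult:
  assumes "unimodular R n V" "unimodular R n W"
  shows "unimodular R n (V * W)"
proof -
  obtain u v where "u \<in> R" "det V * u = 1" "v \<in> R" "det W * v = 1"
    using assms unfolding unimodular_def by blast
  moreover have "det (V * W) = det V * det W"
    using assms by (auto simp: unimodular_def mat_over_def intro: det_mult)
  ultimately have "det (V * W) * (u * v) = 1" by (simp add: algebra_simps)
  then show ?thesis
    using assms \<open>u \<in> R\<close> \<open>v \<in> R\<close> unfolding unimodular_def by (blast intro: mult_mat_over)
qed

lemma unimodular_det_norm: "unimodular R n V \<Longrightarrow> cmod (det V) = 1"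
  unfolding unimodular_def using unit_norm_eq_1 det_mem by blast

lemma unimodular_inverse:
  assumes "unimodular R n V"
  shows "\<exists>W. unimodular R n W \<and> V * W = 1\<^sub>m n \<and> W * V = 1\<^sub>m n"
proof -
  obtain u where V: "V \<in> mat_over R n n" "u \<in> R" "det V * u = 1"
    using assms unfolding unimodular_def by blast
  have Vc: "V \<in> carrier_mat n n" using V(1) by (rule mat_over_carrier)
  define W where "W = u \<cdot>\<^sub>m adj_mat V"
  have Wc: "W \<in> carrier_mat n n" unfolding W_def using adj_mat(1)[OF Vc] by auto
  have "V * W = u \<cdot>\<^sub>m (V * adj_mat V)"
    unfolding W_def using adj_mat(1)[OF Vc] Vc by (simp add: mult_smult_distrib)
  also have "\<dots> = 1\<^sub>m n"
    using adj_mat(2)[OF Vc] V(3) by (intro eq_matI) (auto simp: mult.commute)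
  finally have VW: "V * W = 1\<^sub>m n" .
  have "W * V = u \<cdot>\<^sub>m (adj_mat V * V)"
    unfolding W_def using adj_mat(1)[OF Vc] Vc by (simp add: mult_smult_assoc_mat)
  also have "\<dots> = 1\<^sub>m n"
    using adj_mat(3)[OF Vc] V(3) by (intro eq_matI) (auto simp: mult.commute)
  finally have WV: "W * V = 1\<^sub>m n" .
  have "cofactor V i j \<in> R" for i j
    using V(1) unfolding cofactor_def
    by (intro mult_mem power_mem uminus_mem one_mem det_mem[of _ "n - 1"] mat_overI)
      (auto simp: mat_over_def mat_delete_def)
  then have "W \<in> mat_over R n n"
    using V(2) Vc Wc by (intro mat_overI) (auto simp: W_def adj_mat_def)
  moreover have "det W * det V = 1" using det_mult[OF Wc Vc] WV by simp
  ultimately show ?thesis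
    using VW WV det_mem[OF V(1)] unfolding unimodular_def by blast
qed

lemma unimodular_addrow_mat: "a \<in> R \<Longrightarrow> k \<noteq> l \<Longrightarrow> unimodular R n (addrow_mat n a k l)"
  unfolding unimodular_def using det_addrow_mat[of k l n a] by (auto intro!: bexI[of _ 1])

lemma unimodular_swaprows_mat:
  "k < n \<Longrightarrow> l < n \<Longrightarrow> k \<noteq> l \<Longrightarrow> unimodular R n (swaprows_mat n k l)"
  unfolding unimodular_def using det_swaprows_mat[of k n l, where 'a = complex]
  by (intro conjI bexI[of _ "-1"]) auto

end

section \<open>Column reduction\<close>

definition lower_triangular_rows :: "nat \<Rightarrow> complex mat \<Rightarrow> bool" where
  "lower_triangular_rows t X \<longleftrightarrow> (\<forall>i<t. \<forall>c. i < c \<and> c < dim_col X \<longrightarrow> X $$ (i, c) = 0)"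

context euclidean_subring
begin

lemma unimodular_mult_assoc_exI:
  assumes "X \<in> carrier_mat p n" "unimodular R n V" "unimodular R n W" "Q ((X * V) * W)"
  shows "\<exists>U. unimodular R n U \<and> Q (X * U)"
proof -
  have "(X * V) * W = X * (V * W)"
    using assms(1-3) by (auto simp: unimodular_def mat_over_def intro: assoc_mult_mat)
  then show ?thesis using assms(2-4) unimodular_mult by metis
qed

lemma euclidean_column_step:
  assumes X: "X \<in> mat_over R p n" and "r < p" "j < n" "l < n" "j \<noteq> l" "X $$ (r, l) \<noteq> 0"
  shows "\<exists>E q. unimodular R n E \<and> cmod ((X * E) $$ (r, l)) < cmod (X $$ (r, l)) \<and>
    (\<forall>i<p. \<forall>c<n. (X * E) $$ (i, c) =
      (if c = j then X $$ (i, l) else if c = l then X $$ (i, j) - q * X $$ (i, l) else X $$ (i, c)))"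
proof -
  have Xc: "X \<in> carrier_mat p n" using X by (rule mat_over_carrier)
  obtain q where q: "q \<in> R" "cmod (X $$ (r, j) - q * X $$ (r, l)) < cmod (X $$ (r, l))"
    using euclidean_division mat_over_index[OF X] assms(2-4,6) by blast
  define E where "E = addrow_mat n (- q) l j * swaprows_mat n j l"
  have E: "unimodular R n E"
    unfolding E_def using q(1) assms(3-5)
    by (intro unimodular_mult unimodular_addrow_mat unimodular_swaprows_mat) auto
  have "X * E = (X * addrow_mat n (- q) l j) * swaprows_mat n j l"
    unfolding E_def using Xc by (intro assoc_mult_mat[symmetric]) auto
  also have "\<dots> = swapcols j l (addcol (- q) j l X)"
    using Xc assms(3,4) by (simp add: addcol_mat swapcols_mat[of _ p n])
  finally have XE: "\<forall>i<p. \<forall>c<n. (X * E) $$ (i, c) =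
      (if c = j then X $$ (i, l) else if c = l then X $$ (i, j) - q * X $$ (i, l) else X $$ (i, c))"
    using Xc assms(3-5) by auto
  then have "cmod ((X * E) $$ (r, l)) < cmod (X $$ (r, l))"
    using q(2) assms(2,4,5) by simp
  with E XE show ?thesis by blast
qed

lemma clear_entry_by_column_operations:
  assumes "X \<in> mat_over R p n" "r < p" "j < n" "l < n" "j \<noteq> l"
  shows "\<exists>V. unimodular R n V \<and> (X * V) $$ (r, l) = 0
    \<and> (\<forall>i<p. \<forall>c<n. c \<noteq> j \<and> c \<noteq> l \<longrightarrow> (X * V) $$ (i, c) = X $$ (i, c))
    \<and> (\<forall>i<p. X $$ (i, j) = 0 \<and> X $$ (i, l) = 0 \<longrightarrow> (X * V) $$ (i, j) = 0 \<and> (X * V) $$ (i, l) = 0)"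
proof -
  have "X $$ (r, l) \<in> R" using assms by (simp add: mat_over_index)
  then show ?thesis
    using assms(1)
  proof (induction "X $$ (r, l)" arbitrary: X rule: norm_induct)
    case (less X)
    have Xc: "X \<in> carrier_mat p n" using less.prems by (rule mat_over_carrier)
    show ?case
    proof (cases "X $$ (r, l) = 0")
      case True
      then show ?thesis using Xc by (intro exI[of _ "1\<^sub>m n"]) (auto simp: unimodular_one)
    next
      case False
      obtain E q where E: "unimodular R n E" "cmod ((X * E) $$ (r, l)) < cmod (X $$ (r, l))"
        and XE: "\<forall>i<p. \<forall>c<n. (X * E) $$ (i, c) =
          (if c = j then X $$ (i, l) else if c = l then X $$ (i, j) - q * X $$ (i, l) else X $$ (i, c))"
        using euclidean_column_step[OF less.prems assms(2-5) False] by blast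
      have XE_R: "X * E \<in> mat_over R p n"
        using less.prems unimodular_mat_over[OF E(1)] by (rule mult_mat_over)
      then obtain V where V: "unimodular R n V" "(X * E * V) $$ (r, l) = 0"
        "\<forall>i<p. \<forall>c<n. c \<noteq> j \<and> c \<noteq> l \<longrightarrow> (X * E * V) $$ (i, c) = (X * E) $$ (i, c)"
        "\<forall>i<p. (X * E) $$ (i, j) = 0 \<and> (X * E) $$ (i, l) = 0 \<longrightarrow> (X * E * V) $$ (i, j) = 0 \<and> (X * E * V) $$ (i, l) = 0"
        using less.hyps(2)[OF mat_over_index[OF XE_R assms(2,4)] E(2)] by blast
      have "\<forall>i<p. \<forall>c<n. c \<noteq> j \<and> c \<noteq> l \<longrightarrow> (X * E * V) $$ (i, c) = X $$ (i, c)"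
        using V(3) XE by simp
      moreover have "\<forall>i<p. X $$ (i, j) = 0 \<and> X $$ (i, l) = 0 \<longrightarrow> (X * E * V) $$ (i, j) = 0 \<and> (X * E * V) $$ (i, l) = 0"
        using V(4) XE assms(3-5) by simp
      ultimately show ?thesis
        using V(2) by (intro unimodular_mult_assoc_exI[OF Xc E(1) V(1)]) simp
    qed
  qed
qed

lemma clear_row_segment:
  assumes X: "X \<in> mat_over R p n" and "t < p" and "lower_triangular_rows t X"
  shows "\<exists>V. unimodular R n V \<and> lower_triangular_rows t (X * V) \<and>
    (\<forall>c. t < c \<and> c \<le> t + q \<and> c < n \<longrightarrow> (X * V) $$ (t, c) = 0)"
proof (induction q)
  case 0
  show ?case using assms mat_over_carrier[OF X] by (intro exI[of _ "1\<^sub>m n"]) (auto simp: unimodular_one)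
next
  case (Suc q)
  then obtain V where V: "unimodular R n V" "lower_triangular_rows t (X * V)"
    "\<forall>c. t < c \<and> c \<le> t + q \<and> c < n \<longrightarrow> (X * V) $$ (t, c) = 0"
    by blast
  show ?case
  proof (cases "Suc (t + q) < n")
    case False
    then show ?thesis using V by (intro exI[of _ V]) auto
  next
    case True
    have "X * V \<in> mat_over R p n" using X unimodular_mat_over[OF V(1)] by (rule mult_mat_over)
    from clear_entry_by_column_operations[OF this \<open>t < p\<close> _ True, of t]
    obtain W where W: "unimodular R n W" "(X * V * W) $$ (t, Suc (t + q)) = 0"
      "\<forall>i<p. \<forall>c<n. c \<noteq> t \<and> c \<noteq> Suc (t + q) \<longrightarrow> (X * V * W) $$ (i, c) = (X * V) $$ (i, c)"
      "\<forall>i<p. (X * V) $$ (i, t) = 0 \<and> (X * V) $$ (i, Suc (t + q)) = 0 \<longrightarrow>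
         (X * V * W) $$ (i, t) = 0 \<and> (X * V * W) $$ (i, Suc (t + q)) = 0"
      using True by auto
    have dims: "dim_col (X * V) = n" "dim_col (X * V * W) = n"
      using unimodular_carrier[OF V(1)] unimodular_carrier[OF W(1)] by auto
    have "(X * V * W) $$ (i, c) = 0" if "i < t" "i < c" "c < n" for i c
    proof (cases "c = t \<or> c = Suc (t + q)")
      case True
      then show ?thesis using V(2) W(4) that True \<open>t < p\<close> \<open>Suc (t + q) < n\<close> dims
        unfolding lower_triangular_rows_def by auto
    next
      case False
      then show ?thesis using V(2) W(3) that \<open>t < p\<close> dims
        unfolding lower_triangular_rows_def by auto
    qed
    then have "lower_triangular_rows t (X * V * W)"
      using dims unfolding lower_triangular_rows_def by auto
    moreover have "(X * V * W) $$ (t, c) = 0" if "t < c" "c \<le> t + Suc q" "c < n" for c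
      using that V(3) W(2,3) \<open>t < p\<close> by (cases "c = Suc (t + q)") auto
    ultimately show ?thesis
      using mat_over_carrier[OF X] by (intro unimodular_mult_assoc_exI[OF _ V(1) W(1)]) auto
  qed
qed

lemma clear_row_right:
  assumes "X \<in> mat_over R p n" and "t < p" and "lower_triangular_rows t X"
  shows "\<exists>V. unimodular R n V \<and> lower_triangular_rows (Suc t) (X * V)"
proof -
  obtain V where "unimodular R n V" "lower_triangular_rows t (X * V)"
    "\<forall>c. t < c \<and> c < n \<longrightarrow> (X * V) $$ (t, c) = 0"
    using clear_row_segment[OF assms, of n] by (meson le_add2 le_trans less_imp_le_nat)
  moreover have "dim_col (X * V) = n" using unimodular_carrier[OF calculation(1)] by simp
  ultimately show ?thesis
    unfolding lower_triangular_rows_def by (metis less_Suc_eq)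
qed

lemma lower_triangularize:
  assumes X: "X \<in> mat_over R p n" and "t \<le> p"
  shows "\<exists>V. unimodular R n V \<and> lower_triangular_rows t (X * V)"
  using \<open>t \<le> p\<close>
proof (induction t)
  case 0
  show ?case using unimodular_one by (auto simp: lower_triangular_rows_def)
next
  case (Suc t)
  then obtain V where V: "unimodular R n V" "lower_triangular_rows t (X * V)" by auto
  have "X * V \<in> mat_over R p n" using X unimodular_mat_over[OF V(1)] by (rule mult_mat_over)
  with clear_row_right V(2) Suc.prems obtain W where "unimodular R n W" "lower_triangular_rows (Suc t) (X * V * W)"
    by (metis Suc_le_lessD)
  then show ?case using X V(1) by (intro unimodular_mult_assoc_exI) (auto dest: mat_over_carrier)
qed

lemma column_reduction:
  assumes "X \<in> mat_over R p n"
  shows "\<exists>V. unimodular R n V \<and> (\<forall>i<p. \<forall>c. p \<le> c \<and> c < n \<longrightarrow> (X * V) $$ (i, c) = 0)"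
proof -
  obtain V where "unimodular R n V" "lower_triangular_rows p (X * V)"
    using lower_triangularize[OF assms le_refl] by blast
  moreover have "dim_col (X * V) = n"
    using calculation(1) by (auto simp: unimodular_def mat_over_def)
  ultimately show ?thesis unfolding lower_triangular_rows_def by auto
qed

end

section \<open>Conjugate transpose and Gram determinants\<close>

definition conj_transpose :: "complex mat \<Rightarrow> complex mat" where
  "conj_transpose A = transpose_mat (map_mat cnj A)"

lemma conj_transpose_dim [simp]:
  "dim_row (conj_transpose A) = dim_col A" "dim_col (conj_transpose A) = dim_row A"
  by (simp_all add: conj_transpose_def)

lemma conj_transpose_index [simp]:
  "i < dim_col A \<Longrightarrow> j < dim_row A \<Longrightarrow> conj_transpose A $$ (i, j) = cnj (A $$ (j, i))"
  unfolding conj_transpose_def by simp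

lemma conj_transpose_conj_transpose [simp]: "conj_transpose (conj_transpose A) = A"
  by (intro eq_matI) auto

interpretation cnj_hom: comm_ring_hom cnj
  by unfold_locales auto

lemma conj_transpose_carrier [intro]: "A \<in> carrier_mat n m \<Longrightarrow> conj_transpose A \<in> carrier_mat m n"
  by (intro carrier_matI) auto

lemma det_conj_transpose: "A \<in> carrier_mat n n \<Longrightarrow> det (conj_transpose A) = cnj (det A)"
  unfolding conj_transpose_def by (subst det_transpose) auto

lemma conj_transpose_mult:
  assumes "A \<in> carrier_mat n m" "B \<in> carrier_mat m p"
  shows "conj_transpose (A * B) = conj_transpose B * conj_transpose A"
  unfolding conj_transpose_def using assms
  by (simp add: cnj_hom.mat_hom_mult transpose_mult[of _ n m _ p])

lemma hinner_commute: "dim_vec v = dim_vec w \<Longrightarrow> hinner w v = cnj (hinner v w)"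
  unfolding hinner_def by (simp add: mult.commute)

lemma conj_transpose_mult_index:
  assumes "A \<in> carrier_mat n k" "B \<in> carrier_mat n m" "i < k" "j < m"
  shows "(conj_transpose A * B) $$ (i, j) = hinner (col A i) (col B j)"
  using assms by (simp add: hinner_def scalar_prod_def atLeast0LessThan)

lemma conj_transpose_mult_vec_index:
  assumes "A \<in> carrier_mat n k" "w \<in> carrier_vec n" "j < k"
  shows "(conj_transpose A *\<^sub>v w) $ j = hinner (col A j) w"
  using assms by (simp add: hinner_def scalar_prod_def atLeast0LessThan)

lemma (in euclidean_subring) conj_transpose_mat_over:
  "A \<in> mat_over R n m \<Longrightarrow> conj_transpose A \<in> mat_over R m n"
  by (intro mat_overI) (auto simp: mat_over_def intro!: cnj_mem)

lemma gram_eq_conj_transpose_mult: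
  assumes "set bs \<subseteq> carrier_vec n"
  shows "gram bs = conj_transpose (mat_of_cols n bs) * mat_of_cols n bs"
proof (rule eq_matI)
  fix i j assume "i < dim_row (conj_transpose (mat_of_cols n bs) * mat_of_cols n bs)"
    "j < dim_col (conj_transpose (mat_of_cols n bs) * mat_of_cols n bs)"
  then have "i < length bs" "j < length bs" by auto
  moreover have "bs ! i \<in> carrier_vec n" "bs ! j \<in> carrier_vec n"
    using assms \<open>i < length bs\<close> \<open>j < length bs\<close> by auto
  ultimately show "gram bs $$ (i, j) = (conj_transpose (mat_of_cols n bs) * mat_of_cols n bs) $$ (i, j)"
    by (subst conj_transpose_mult_index[of _ n "length bs" _ "length bs"]) (auto simp: gram_def)
qed (auto simp: gram_def)

lemma det_gram_square:
  assumes "set bs \<subseteq> carrier_vec n" "length bs = n"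
  shows "det (gram bs) = complex_of_real ((cmod (det (mat_of_cols n bs)))\<^sup>2)"
proof -
  have B: "mat_of_cols n bs \<in> carrier_mat n n" using mat_of_cols_carrier[of n bs] assms(2) by simp
  show ?thesis
    unfolding gram_eq_conj_transpose_mult[OF assms(1)] complex_norm_square
    by (simp add: det_mult[OF conj_transpose_carrier[OF B] B] det_conj_transpose[OF B] mult.commute)
qed

lemma gram_append:
  assumes "set xs \<subseteq> carrier_vec n" "set ys \<subseteq> carrier_vec n"
    and orth: "\<forall>x\<in>set xs. \<forall>y\<in>set ys. hinner x y = 0"
  shows "gram (xs @ ys) = four_block_mat (gram xs) (0\<^sub>m (length xs) (length ys)) (0\<^sub>m (length ys) (length xs)) (gram ys)"
    (is "_ = ?F")
proof (rule eq_matI)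
  fix i j assume "i < dim_row ?F" "j < dim_col ?F"
  then have ij: "i < length xs + length ys" "j < length xs + length ys" by (auto simp: gram_def)
  have "hinner y x = 0" if "x \<in> set xs" "y \<in> set ys" for x y
  proof -
    have "dim_vec x = dim_vec y" using that assms(1,2) by (metis carrier_vecD subsetD)
    then show ?thesis using orth that hinner_commute[of x y] by simp
  qed
  then show "gram (xs @ ys) $$ (i, j) = ?F $$ (i, j)"
    using ij orth by (auto simp: gram_def nth_append)
qed (auto simp: gram_def)

lemma det_gram_append_orthogonal:
  assumes "set xs \<subseteq> carrier_vec n" "set ys \<subseteq> carrier_vec n"
    and "\<forall>x\<in>set xs. \<forall>y\<in>set ys. hinner x y = 0"
  shows "det (gram (xs @ ys)) = det (gram xs) * det (gram ys)"
  unfolding gram_append[OF assms]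
  by (rule det_four_block_mat_lower_left_zero) (auto simp: gram_def)

lemma det_gram_mult_unit:
  assumes "set bs \<subseteq> carrier_vec n" "set bs' \<subseteq> carrier_vec n"
    and P: "P \<in> carrier_mat (length bs) (length bs)"
    and bs': "mat_of_cols n bs' = mat_of_cols n bs * P" and "cmod (det P) = 1"
  shows "det (gram bs') = det (gram bs)"
proof -
  let ?B = "mat_of_cols n bs"
  have B: "?B \<in> carrier_mat n (length bs)" by simp
  let ?N = "length bs"
  have "gram bs' = (conj_transpose P * conj_transpose ?B) * (?B * P)"
    unfolding gram_eq_conj_transpose_mult[OF assms(2)] bs' conj_transpose_mult[OF B P] ..
  also have "\<dots> = conj_transpose P * (conj_transpose ?B * ?B) * P"
    using assoc_mult_mat[OF conj_transpose_carrier[OF P] conj_transpose_carrier[OF B] mult_carrier_mat[OF B P]]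
      assoc_mult_mat[OF conj_transpose_carrier[OF B] B P]
      assoc_mult_mat[OF conj_transpose_carrier[OF P] mult_carrier_mat[OF conj_transpose_carrier[OF B] B] P]
    by simp
  also have "det \<dots> = (cmod (det P))\<^sup>2 * det (gram bs)"
  proof -
    have G: "gram bs \<in> carrier_mat ?N ?N" by (simp add: gram_def)
    show ?thesis
      unfolding gram_eq_conj_transpose_mult[OF assms(1), symmetric] complex_norm_square
      using det_mult[OF mult_carrier_mat[OF conj_transpose_carrier[OF P] G] P]
        det_mult[OF conj_transpose_carrier[OF P] G] det_conj_transpose[OF P]
      by simp
  qed
  finally show ?thesis using assms(5) by simp
qed

section \<open>Bases of R-submodules\<close>

lemma ex1_iff_ex1_of_inverse:
  assumes "\<And>c. P c \<Longrightarrow> Q (f c)" "\<And>y. Q y \<Longrightarrow> P (g y)"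
    and "\<And>c. P c \<Longrightarrow> g (f c) = c" "\<And>y. Q y \<Longrightarrow> f (g y) = y"
  shows "(\<exists>!c. P c) \<longleftrightarrow> (\<exists>!y. Q y)"
  using assms by metis

lemma finsum_smult_eq_mult_mat_of_cols:
  assumes "set bs \<subseteq> carrier_vec n"
  shows "finsum_vec TYPE(complex) n (\<lambda>i. c i \<cdot>\<^sub>v bs ! i) {0..<length bs} = mat_of_cols n bs *\<^sub>v vec (length bs) c"
proof -
  have bs: "bs ! i \<in> carrier_vec n" if "i < length bs" for i using assms that by auto
  then have dim: "dim_vec (bs ! i) = n" if "i < length bs" for i using that by auto
  from bs have F: "(\<lambda>i. c i \<cdot>\<^sub>v bs ! i) \<in> {0..<length bs} \<rightarrow> carrier_vec n" by auto
  show ?thesis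
  proof (rule eq_vecI)
    fix r assume "r < dim_vec (mat_of_cols n bs *\<^sub>v vec (length bs) c)"
    then have r: "r < n" by simp
    have "finsum_vec TYPE(complex) n (\<lambda>i. c i \<cdot>\<^sub>v bs ! i) {0..<length bs} $ r = (\<Sum>i = 0..<length bs. c i * bs ! i $ r)"
      using dim r by (subst index_finsum_vec[OF _ r F]) (auto intro!: sum.cong)
    also have "\<dots> = (mat_of_cols n bs *\<^sub>v vec (length bs) c) $ r"
      using r by (simp add: scalar_prod_def mat_of_cols_index mult.commute)
    finally show "finsum_vec TYPE(complex) n (\<lambda>i. c i \<cdot>\<^sub>v bs ! i) {0..<length bs} $ r = (mat_of_cols n bs *\<^sub>v vec (length bs) c) $ r" .
  qed (use finsum_vec_closed[OF F] in simp)
qed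

lemma is_R_basis_iff:
  assumes "L \<subseteq> carrier_vec n"
  shows "is_R_basis R n L bs \<longleftrightarrow> set bs \<subseteq> L \<and>
    (\<forall>w\<in>L. \<exists>!y. y \<in> vec_over R (length bs) \<and> w = mat_of_cols n bs *\<^sub>v y)"
proof (cases "set bs \<subseteq> L")
  case True
  let ?N = "length bs"
  have bs: "set bs \<subseteq> carrier_vec n" using True assms by blast
  have vec_restrict: "vec ?N (\<lambda>i. if i < ?N then y $ i else 0) = y" if "y \<in> carrier_vec ?N" for y
    using that by (auto intro!: eq_vecI)
  have "(\<exists>!c. (\<forall>i<?N. c i \<in> R) \<and> (\<forall>i\<ge>?N. c i = 0) \<and> w = finsum_vec TYPE(complex) n (\<lambda>i. c i \<cdot>\<^sub>v bs ! i) {0..<?N})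
     \<longleftrightarrow> (\<exists>!y. y \<in> vec_over R ?N \<and> w = mat_of_cols n bs *\<^sub>v y)" for w
    unfolding finsum_smult_eq_mult_mat_of_cols[OF bs]
    by (rule ex1_iff_ex1_of_inverse[where f = "vec ?N" and g = "\<lambda>y i. if i < ?N then y $ i else 0"])
      (auto simp: vec_over_def vec_restrict)
  then show ?thesis using True unfolding is_R_basis_def by simp
qed (simp add: is_R_basis_def)

lemma mult_eq_one_mat_imp_le:
  fixes P Q :: "'a :: field mat"
  assumes P: "P \<in> carrier_mat N m" and Q: "Q \<in> carrier_mat m N" and PQ: "P * Q = 1\<^sub>m N"
  shows "N \<le> m"
proof (rule ccontr)
  assume "\<not> N \<le> m"
  \<comment> \<open>pad P and Q with zeros to N \<times> N matrices: the padded P has a zero column\<close>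
  define P' where "P' = mat N N (\<lambda>(i, j). if j < m then P $$ (i, j) else 0)"
  define Q' where "Q' = mat N N (\<lambda>(i, j). if i < m then Q $$ (i, j) else 0)"
  have P': "P' \<in> carrier_mat N N" and Q': "Q' \<in> carrier_mat N N" by (simp_all add: P'_def Q'_def)
  have "P' * Q' = P * Q"
  proof (rule eq_matI)
    fix i j assume "i < dim_row (P * Q)" "j < dim_col (P * Q)"
    then have ij: "i < N" "j < N" using P Q by auto
    have "(P' * Q') $$ (i, j) = (\<Sum>c<N. P' $$ (i, c) * Q' $$ (c, j))"
      using ij P' Q' by (simp add: scalar_prod_def atLeast0LessThan)
    also have "\<dots> = (\<Sum>c<m. P' $$ (i, c) * Q' $$ (c, j))"
      using \<open>\<not> N \<le> m\<close> ij by (intro sum.mono_neutral_right) (auto simp: P'_def Q'_def)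
    also have "\<dots> = (P * Q) $$ (i, j)"
      using \<open>\<not> N \<le> m\<close> ij P Q by (simp add: P'_def Q'_def scalar_prod_def atLeast0LessThan)
    finally show "(P' * Q') $$ (i, j) = (P * Q) $$ (i, j)" .
  qed (use P Q P' Q' in auto)
  then have det1: "det P' * det Q' = 1" using det_mult[OF P' Q'] PQ by simp
  have "P' *\<^sub>v unit_vec N (N - 1) = 0\<^sub>v N"
    using \<open>\<not> N \<le> m\<close> by (intro eq_vecI) (auto simp: P'_def scalar_prod_def unit_vec_def intro!: sum.neutral)
  moreover have "unit_vec N (N - 1) $ (N - 1) \<noteq> (0\<^sub>v N :: 'a vec) $ (N - 1)"
    using \<open>\<not> N \<le> m\<close> by simp
  ultimately have "det P' = 0"
    using det_0_iff_vec_prod_zero[OF P'] unit_vec_carrier[of N "N - 1"] by metis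
  with det1 show False by simp
qed

context euclidean_subring
begin

lemma basis_coordinate_mat:
  assumes L: "L \<subseteq> carrier_vec n" and bs: "is_R_basis R n L bs" and "set bs' \<subseteq> L"
  shows "\<exists>P \<in> mat_over R (length bs) (length bs'). mat_of_cols n bs' = mat_of_cols n bs * P"
proof -
  let ?B = "mat_of_cols n bs" and ?N = "length bs"
  have "\<forall>j<length bs'. \<exists>y. y \<in> vec_over R ?N \<and> bs' ! j = ?B *\<^sub>v y"
    using bs \<open>set bs' \<subseteq> L\<close> unfolding is_R_basis_iff[OF L] by (meson ex1_implies_ex nth_mem subsetD)
  then obtain Y where Y: "\<And>j. j < length bs' \<Longrightarrow> Y j \<in> vec_over R ?N \<and> bs' ! j = ?B *\<^sub>v Y j"
    by metis
  define P where "P = mat ?N (length bs') (\<lambda>(i, j). Y j $ i)"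
  have colP: "col P j = Y j" if "j < length bs'" for j
    using Y[OF that] that by (intro eq_vecI) (auto simp: P_def vec_over_def)
  have "P \<in> mat_over R ?N (length bs')"
    using Y by (intro mat_overI) (auto simp: P_def vec_over_def)
  moreover have "mat_of_cols n bs' = ?B * P"
  proof (rule eq_matI)
    fix i j assume ij: "i < dim_row (?B * P)" "j < dim_col (?B * P)"
    then have "(?B * P) $$ (i, j) = (?B *\<^sub>v col P j) $ i" by simp
    also have "\<dots> = bs' ! j $ i" using ij colP Y by (simp add: P_def)
    finally show "mat_of_cols n bs' $$ (i, j) = (?B * P) $$ (i, j)"
      using ij by (simp add: P_def mat_of_cols_index)
  qed (simp_all add: P_def)
  ultimately show ?thesis by blast
qed

lemma basis_mult_eq_self_imp_one:
  assumes L: "L \<subseteq> carrier_vec n" and bs: "is_R_basis R n L bs"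
    and X: "X \<in> mat_over R (length bs) (length bs)" and BX: "mat_of_cols n bs * X = mat_of_cols n bs"
  shows "X = 1\<^sub>m (length bs)"
proof (rule eq_matI)
  let ?B = "mat_of_cols n bs" and ?N = "length bs"
  have unique: "\<exists>!y. y \<in> vec_over R ?N \<and> bs ! j = ?B *\<^sub>v y" if "j < ?N" for j
  proof -
    have "bs ! j \<in> L" using bs that by (auto simp: is_R_basis_def)
    then show ?thesis using bs unfolding is_R_basis_iff[OF L] by blast
  qed
  have Xc: "X \<in> carrier_mat ?N ?N" using X by (rule mat_over_carrier)
  fix i j assume "i < dim_row (1\<^sub>m ?N)" "j < dim_col (1\<^sub>m ?N)"
  then have ij: "i < ?N" "j < ?N" by auto
  have "bs ! j \<in> carrier_vec n" using bs ij L unfolding is_R_basis_def by (meson nth_mem subsetD)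
  then have "bs ! j = ?B *\<^sub>v col X j"
    using arg_cong[OF BX, of "\<lambda>M. col M j"] col_mult2[OF mat_of_cols_carrier(1) Xc ij(2)] ij
    by (simp add: col_mat_of_cols)
  moreover have "bs ! j = ?B *\<^sub>v unit_vec ?N j"
    using \<open>bs ! j \<in> carrier_vec n\<close> ij col_mult2[OF mat_of_cols_carrier(1)[of n bs] one_carrier_mat ij(2)]
    by simp
  moreover have "col X j \<in> vec_over R ?N" "unit_vec ?N j \<in> vec_over R ?N"
    using X ij by (auto simp: vec_over_def mat_over_def unit_vec_def)
  ultimately have "col X j $ i = unit_vec ?N j $ i" using unique[OF ij(2)] by metis
  then show "X $$ (i, j) = 1\<^sub>m ?N $$ (i, j)"
    using ij Xc by simp
qed (use X in \<open>auto simp: mat_over_def\<close>)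

lemma det_gram_basis_invariant:
  assumes L: "L \<subseteq> carrier_vec n" and bs: "is_R_basis R n L bs" and bs': "is_R_basis R n L bs'"
  shows "length bs' = length bs \<and> det (gram bs') = det (gram bs)"
proof -
  let ?B = "mat_of_cols n bs" and ?B' = "mat_of_cols n bs'" and ?N = "length bs" and ?m = "length bs'"
  have sets: "set bs \<subseteq> L" "set bs' \<subseteq> L" using bs bs' by (simp_all add: is_R_basis_def)
  obtain P where P: "P \<in> mat_over R ?N ?m" "?B' = ?B * P"
    using basis_coordinate_mat[OF L bs sets(2)] by blast
  obtain Q where Q: "Q \<in> mat_over R ?m ?N" "?B = ?B' * Q"
    using basis_coordinate_mat[OF L bs' sets(1)] by blast
  have Pc: "P \<in> carrier_mat ?N ?m" and Qc: "Q \<in> carrier_mat ?m ?N"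
    using P(1) Q(1) by (simp_all add: mat_over_carrier)
  have "?B * (P * Q) = ?B"
    using P(2) Q(2) Pc Qc by (metis assoc_mult_mat mat_of_cols_carrier)
  then have PQ: "P * Q = 1\<^sub>m ?N"
    using basis_mult_eq_self_imp_one[OF L bs] mult_mat_over[OF P(1) Q(1)] by blast
  have "?B' * (Q * P) = ?B'"
    using P(2) Q(2) Pc Qc by (metis assoc_mult_mat mat_of_cols_carrier)
  then have QP: "Q * P = 1\<^sub>m ?m"
    using basis_mult_eq_self_imp_one[OF L bs'] mult_mat_over[OF Q(1) P(1)] by blast
  have len: "?m = ?N"
    using mult_eq_one_mat_imp_le[OF Pc Qc PQ] mult_eq_one_mat_imp_le[OF Qc Pc QP] by simp
  then have "det P * det Q = 1" using det_mult[of P ?N Q] Pc Qc PQ by simp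
  then have "cmod (det P) = 1"
    using P(1) Q(1) len by (intro unit_norm_eq_1[of _ "det Q"] det_mem) auto
  then have "det (gram bs') = det (gram bs)"
    using sets L Pc len P(2) by (intro det_gram_mult_unit[of bs n bs' P]) auto
  with len show ?thesis by simp
qed

end

section \<open>Determinantal divisors\<close>

lemma pick_atLeastLessThan: "j < k \<Longrightarrow> pick {0..<k} j = j"
proof -
  assume "j < k"
  then have "{a \<in> {0..<k}. a < j} = {0..<j}" by auto
  then show ?thesis using pick_card_in_set[of j "{0..<k}"] \<open>j < k\<close> by simp
qed

lemma submatrix_rows:
  assumes "A \<in> carrier_mat n k" "I \<subseteq> {0..<n}"
  shows "submatrix A I {0..<k} = mat (card I) k (\<lambda>(a, b). A $$ (pick I a, b))"
proof -
  have "{i. i < n \<and> i \<in> I} = I" "{j. j < k \<and> j \<in> {0..<k}} = {0..<k}" using assms(2) by auto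
  then show ?thesis
    using assms(1) by (intro eq_matI) (auto simp: submatrix_def pick_atLeastLessThan)
qed

lemma pick_less_of_subset:
  assumes "I \<subseteq> {0..<n}" "a < card I"
  shows "pick I a < n"
proof -
  have "{i. i < n \<and> i \<in> I} = I" using assms(1) by auto
  then show ?thesis using pick_le[of a n I] assms(2) by simp
qed

context euclidean_subring
begin

lemma minors_subset:
  assumes "A \<in> mat_over R n k"
  shows "minors k A \<subseteq> R"
proof
  fix m assume "m \<in> minors k A"
  then obtain I where I: "m = det (submatrix A I {0..<k})" "I \<subseteq> {0..<n}" "card I = k"
    using mat_over_carrier[OF assms] unfolding minors_def by auto
  have "submatrix A I {0..<k} \<in> mat_over R k k"
    unfolding submatrix_rows[OF mat_over_carrier[OF assms] I(2)] I(3)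
    using assms pick_less_of_subset[OF I(2)] I(3) by (intro mat_overI) (auto intro: mat_over_index)
  then show "m \<in> R" unfolding I(1) by (rule det_mem)
qed

lemma det_divisor_exists:
  assumes "A \<in> mat_over R n k"
  shows "\<exists>d. is_det_divisor R k A d"
proof -
  have "minors k A \<subseteq> (\<lambda>I. det (submatrix A I {0..<k})) ` Pow {0..<dim_row A}"
    unfolding minors_def by auto
  then have "finite (minors k A)" by (rule finite_subset) auto
  from finite_gcd_exists[OF this minors_subset[OF assms]] show ?thesis
    unfolding is_det_divisor_def by blast
qed

lemma det_divides_minors_of_mult:
  assumes B: "B \<in> mat_over R n k" and C: "C \<in> carrier_mat k k"
  shows "\<forall>m\<in>minors k (B * C). R_dvd R (det C) m"
proof
  have Bc: "B \<in> carrier_mat n k" using B by (rule mat_over_carrier)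
  fix m assume "m \<in> minors k (B * C)"
  then obtain I where I: "m = det (submatrix (B * C) I {0..<k})" "I \<subseteq> {0..<n}" "card I = k"
    using Bc C unfolding minors_def by auto
  have "submatrix (B * C) I {0..<k} = submatrix B I {0..<k} * C"
    unfolding submatrix_rows[OF mult_carrier_mat[OF Bc C] I(2)] submatrix_rows[OF Bc I(2)]
    using Bc C I(3) pick_less_of_subset[OF I(2)]
    by (intro eq_matI) (auto simp: scalar_prod_def)
  moreover have "submatrix B I {0..<k} \<in> mat_over R k k"
    unfolding submatrix_rows[OF Bc I(2)] I(3)
    using B pick_less_of_subset[OF I(2)] I(3) by (intro mat_overI) (auto intro: mat_over_index)
  ultimately show "R_dvd R (det C) m"
    unfolding I(1) R_dvd_def using C det_mult[OF _ C] det_mem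
    by (metis mat_over_carrier mult.commute)
qed

lemma R_dvd_det_rows:
  assumes A: "A \<in> mat_over R n k" and d: "\<forall>m\<in>minors k A. R_dvd R d m"
    and f: "\<And>i. i < k \<Longrightarrow> f i < n"
  shows "R_dvd R d (det (mat\<^sub>r k k (\<lambda>i. row A (f i))))"
proof (cases "inj_on f {0..<k}")
  case False
  then obtain i j where ij: "i < k" "j < k" "i \<noteq> j" "f i = f j" unfolding inj_on_def by auto
  have "det (mat\<^sub>r k k (\<lambda>i. row A (f i))) = 0"
    by (rule det_identical_rows[OF _ ij(3) ij(1) ij(2)]) (use ij mat_over_carrier[OF A] in auto)
  then show ?thesis by (simp add: R_dvd_0)
next
  case True
  have Ac: "A \<in> carrier_mat n k" using A by (rule mat_over_carrier)
  define I where "I = f ` {0..<k}"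
  have I: "I \<subseteq> {0..<n}" "card I = k" "finite I"
    unfolding I_def using f card_image[OF True] by auto
  define S where "S = submatrix A I {0..<k}"
  have S: "S = mat k k (\<lambda>(a, b). A $$ (pick I a, b))"
    unfolding S_def submatrix_rows[OF Ac I(1)] I(2) ..
  have "det S \<in> minors k A" unfolding minors_def S_def using I Ac by auto
  then have dS: "R_dvd R d (det S)" using d by blast
  \<comment> \<open>the rows of the matrix are those of S, permuted by the rank of f i in I\<close>
  define p where "p = (\<lambda>i. if i < k then card {a\<in>I. a < f i} else i)"
  have pick_p: "pick I (p i) = f i" if "i < k" for i
    unfolding p_def using that pick_card_in_set[of "f i" I] I_def by auto
  have p_less: "p i < k" if "i < k" for i
  proof -
    have "{a\<in>I. a < f i} \<subset> I" using that I_def by auto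
    then have "card {a\<in>I. a < f i} < card I" using I(3) by (rule psubset_card_mono[rotated])
    then show ?thesis unfolding p_def using that I(2) by simp
  qed
  have "inj_on p {0..<k}"
    using True pick_p by (intro inj_onI) (metis atLeastLessThan_iff inj_onD)
  then have p: "p permutes {0..<k}"
    by (rule inj_on_nat_permutes) (use p_less in \<open>auto simp: p_def\<close>)
  have "mat\<^sub>r k k (\<lambda>i. row A (f i)) = mat k k (\<lambda>(i, j). S $$ (p i, j))"
    using Ac f pick_p p_less by (intro eq_matI) (auto simp: S)
  then have "det (mat\<^sub>r k k (\<lambda>i. row A (f i))) = of_int (sign p) * det S"
    using det_permute_rows[OF _ p, of S] S by simp
  then show ?thesis using dS by (simp add: R_dvd_mult_left sign_mem)
qed

lemma R_dvd_det_mult_of_minors: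
  assumes A: "A \<in> mat_over R n k" and Y: "Y \<in> mat_over R k n"
    and d: "\<forall>m\<in>minors k A. R_dvd R d m"
  shows "R_dvd R d (det (Y * A))"
proof -
  have Ac: "A \<in> carrier_mat n k" and Yc: "Y \<in> carrier_mat k n"
    using A Y by (simp_all add: mat_over_carrier)
  let ?F = "{f. (\<forall>i\<in>{0..<k}. f i \<in> {0..<n}) \<and> (\<forall>i. i \<notin> {0..<k} \<longrightarrow> f i = i)}"
  have "det (Y * A) = (\<Sum>f\<in>?F. det (mat\<^sub>r k k (\<lambda>i. Y $$ (i, f i) \<cdot>\<^sub>v row A (f i))))"
    unfolding mat_mul_finsum_alt[OF Yc Ac] by (rule det_linear_rows_sum) (use Ac in auto)
  also have "\<dots> = (\<Sum>f\<in>?F. prod (\<lambda>i. Y $$ (i, f i)) {0..<k} * det (mat\<^sub>r k k (\<lambda>i. row A (f i))))"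
    by (rule sum.cong[OF refl], rule det_rows_mul) (use Ac in auto)
  finally have expand: "det (Y * A) = \<dots>" .
  show ?thesis unfolding expand
  proof (rule R_dvd_sum)
    fix f assume "f \<in> ?F"
    then have f: "\<And>i. i < k \<Longrightarrow> f i < n" by auto
    have "prod (\<lambda>i. Y $$ (i, f i)) {0..<k} \<in> R" using Y f by (auto intro!: prod_mem mat_over_index)
    then show "R_dvd R d (prod (\<lambda>i. Y $$ (i, f i)) {0..<k} * det (mat\<^sub>r k k (\<lambda>i. row A (f i))))"
      using R_dvd_det_rows[OF A d f] by (simp add: R_dvd_mult_left)
  qed
qed

end

section \<open>The orthogonal lattice of a column-reduced icube\<close>

locale reduced_icube = euclidean_subring +
  fixes n k :: nat and lam :: real and A V W :: "complex mat"
  assumes k_less_n: "k < n"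
    and icube: "icube R n k lam A"
    and unimodular_V: "unimodular R n V"
    and unimodular_W: "unimodular R n W"
    and V_W: "V * W = 1\<^sub>m n" and W_V: "W * V = 1\<^sub>m n"
    and reduced: "\<And>i c. i < k \<Longrightarrow> k \<le> c \<Longrightarrow> c < n \<Longrightarrow> (conj_transpose A * V) $$ (i, c) = 0"
begin

definition H :: "complex mat" where
  "H = mat k k (\<lambda>(i, j). (conj_transpose A * V) $$ (i, j))"

definition W_top :: "complex mat" where
  "W_top = mat k n (\<lambda>(i, j). W $$ (i, j))"

definition V_left :: "complex mat" where
  "V_left = mat n k (\<lambda>(i, j). V $$ (i, j))"

definition V_right :: "complex mat" where
  "V_right = mat n (n - k) (\<lambda>(i, j). V $$ (i, k + j))"

lemma carriers:
  "A \<in> carrier_mat n k" "V \<in> carrier_mat n n" "W \<in> carrier_mat n n" "H \<in> carrier_mat k k"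
  "W_top \<in> carrier_mat k n" "V_left \<in> carrier_mat n k" "V_right \<in> carrier_mat n (n - k)"
  using icube unimodular_carrier[OF unimodular_V] unimodular_carrier[OF unimodular_W]
  by (simp_all add: icube_def H_def W_top_def V_left_def V_right_def)

lemma A_mat_over: "A \<in> mat_over R n k"
  using icube by (intro mat_overI) (auto simp: icube_def)

lemma lam_pos: "lam > 0"
  using icube by (simp add: icube_def)

lemma conj_transpose_A_mult_A: "conj_transpose A * A = complex_of_real lam \<cdot>\<^sub>m 1\<^sub>m k"
proof (rule eq_matI)
  fix i j assume "i < dim_row (complex_of_real lam \<cdot>\<^sub>m 1\<^sub>m k)" "j < dim_col (complex_of_real lam \<cdot>\<^sub>m 1\<^sub>m k)"
  then show "(conj_transpose A * A) $$ (i, j) = (complex_of_real lam \<cdot>\<^sub>m 1\<^sub>m k) $$ (i, j)"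
    using icube conj_transpose_mult_index[OF carriers(1) carriers(1)] by (auto simp: icube_def)
qed (use carriers in auto)

lemma conj_transpose_A_factor: "conj_transpose A = H * W_top"
proof (rule eq_matI)
  define K where "K = conj_transpose A * V"
  have K: "K \<in> carrier_mat k n" unfolding K_def using carriers by auto
  have KW: "K * W = conj_transpose A"
    using assoc_mult_mat[OF conj_transpose_carrier[OF carriers(1)] carriers(2,3)] V_W carriers(1)
    by (simp add: K_def)
  fix i j assume "i < dim_row (H * W_top)" "j < dim_col (H * W_top)"
  then have ij: "i < k" "j < n" using carriers by auto
  have "conj_transpose A $$ (i, j) = (\<Sum>c<n. K $$ (i, c) * W $$ (c, j))"
    unfolding KW[symmetric] using ij K carriers by (simp add: scalar_prod_def atLeast0LessThan)
  also have "\<dots> = (\<Sum>c<k. K $$ (i, c) * W $$ (c, j))"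
    using k_less_n ij reduced by (intro sum.mono_neutral_right) (auto simp: K_def)
  also have "\<dots> = (H * W_top) $$ (i, j)"
    using ij by (simp add: H_def W_top_def K_def scalar_prod_def atLeast0LessThan)
  finally show "conj_transpose A $$ (i, j) = (H * W_top) $$ (i, j)" .
qed (use carriers in auto)

lemma H_mult_W_top_A: "H * (W_top * A) = complex_of_real lam \<cdot>\<^sub>m 1\<^sub>m k"
  using conj_transpose_A_mult_A carriers
  by (simp add: conj_transpose_A_factor assoc_mult_mat[of H k k W_top n A k])

lemma norm_det_H_mult: "cmod (det H) * cmod (det (W_top * A)) = lam ^ k"
proof -
  have "det H * det (W_top * A) = complex_of_real lam ^ k"
    using H_mult_W_top_A det_mult[of H k "W_top * A"] carriers by simp
  then show ?thesis using lam_pos by (metis norm_mult norm_of_real norm_power abs_of_pos)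
qed

lemma det_H_nonzero: "det H \<noteq> 0"
  using norm_det_H_mult lam_pos by auto

lemma conj_transpose_H: "conj_transpose H = conj_transpose V_left * A"
  using carriers k_less_n
  by (intro eq_matI) (auto simp: H_def V_left_def scalar_prod_def cnj_sum mult.commute intro!: sum.cong)

lemma norm_det_divisor:
  assumes "is_det_divisor R k A d"
  shows "cmod d = cmod (det H)"
proof -
  have dR: "d \<in> R" and d_dvd: "\<forall>m\<in>minors k A. R_dvd R d m"
    and d_gcd: "\<forall>e\<in>R. (\<forall>m\<in>minors k A. R_dvd R e m) \<longrightarrow> R_dvd R e d"
    using assms by (auto simp: is_det_divisor_def)
  have V_left: "V_left \<in> mat_over R n k"
    using unimodular_mat_over[OF unimodular_V] k_less_n by (intro mat_overI) (auto simp: V_left_def mat_over_def)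
  have W_top: "W_top \<in> mat_over R k n"
    using unimodular_mat_over[OF unimodular_W] k_less_n by (intro mat_overI) (auto simp: W_top_def mat_over_def)
  have det_H: "cnj (det H) = det (conj_transpose V_left * A)"
    using conj_transpose_H det_conj_transpose carriers by metis
  have "cnj (det H) \<in> R"
    unfolding det_H using V_left A_mat_over
    by (intro det_mem mult_mat_over conj_transpose_mat_over)
  moreover have "A = conj_transpose W_top * conj_transpose H"
    using conj_transpose_A_factor carriers by (metis conj_transpose_conj_transpose conj_transpose_mult)
  then have "\<forall>m\<in>minors k A. R_dvd R (cnj (det H)) m"
    using det_divides_minors_of_mult[OF conj_transpose_mat_over[OF W_top], of "conj_transpose H"]
      carriers det_conj_transpose by auto
  ultimately have "R_dvd R (cnj (det H)) d" using d_gcd by blast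
  moreover have "R_dvd R d (cnj (det H))"
    unfolding det_H using A_mat_over conj_transpose_mat_over[OF V_left] d_dvd
    by (rule R_dvd_det_mult_of_minors)
  ultimately show ?thesis
    using associated_norm_eq[OF dR \<open>cnj (det H) \<in> R\<close>] by simp
qed

lemma orth_lattice_carrier: "orth_lattice R n k A \<subseteq> carrier_vec n"
  by (auto simp: orth_lattice_def vec_over_def)

lemma orth_lattice_iff:
  "w \<in> orth_lattice R n k A \<longleftrightarrow> w \<in> vec_over R n \<and> conj_transpose A *\<^sub>v w = 0\<^sub>v k"
proof -
  have "conj_transpose A *\<^sub>v w = 0\<^sub>v k \<longleftrightarrow> (\<forall>j<k. hinner (col A j) w = 0)" if "w \<in> carrier_vec n"
    using conj_transpose_mult_vec_index[OF carriers(1) that] carriers(1) by (auto simp: vec_eq_iff)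
  then show ?thesis by (auto simp: orth_lattice_def vec_over_def)
qed

lemma cols_V_right_subset: "set (cols V_right) \<subseteq> orth_lattice R n k A"
proof
  fix v assume "v \<in> set (cols V_right)"
  then obtain i where "i < length (cols V_right)" "v = cols V_right ! i" by (metis in_set_conv_nth)
  then have i: "i < n - k" "v = col V_right i" using carriers(7) by auto
  have "hinner (col A j) v = 0" if "j < k" for j
  proof -
    have "v = col V (k + i)" using i carriers by (auto simp: V_right_def)
    then show ?thesis
      using reduced[of j "k + i"] conj_transpose_mult_index[OF carriers(1,2) that] that i by simp
  qed
  moreover have "v \<in> vec_over R n"
    using i unimodular_mat_over[OF unimodular_V] by (auto simp: vec_over_def V_right_def mat_over_def)
  ultimately show "v \<in> orth_lattice R n k A" by (simp add: orth_lattice_def)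
qed

lemma W_mult_V_right: "W * V_right = mat n (n - k) (\<lambda>(r, i). if r = k + i then 1 else 0)"
proof (rule eq_matI)
  fix r i assume "r < dim_row (mat n (n - k) (\<lambda>(r, i). if r = k + i then 1 else 0 :: complex))"
    "i < dim_col (mat n (n - k) (\<lambda>(r, i). if r = k + i then 1 else 0 :: complex))"
  then have ri: "r < n" "i < n - k" by auto
  have "(W * V_right) $$ (r, i) = (W * V) $$ (r, k + i)"
    using ri carriers by (simp add: V_right_def scalar_prod_def)
  then show "(W * V_right) $$ (r, i) = mat n (n - k) (\<lambda>(r, i). if r = k + i then 1 else 0) $$ (r, i)"
    using ri W_V by simp
qed (use carriers in auto)

lemma V_right_mult_vec_inj:
  assumes "x \<in> carrier_vec (n - k)" "y \<in> carrier_vec (n - k)" "V_right *\<^sub>v x = V_right *\<^sub>v y"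
  shows "x = y"
proof (rule eq_vecI)
  let ?E = "mat n (n - k) (\<lambda>(r, i). if r = k + i then 1 else 0 :: complex)"
  have "?E *\<^sub>v x = ?E *\<^sub>v y"
    using assms(3) W_mult_V_right carriers assoc_mult_mat_vec[of W n n V_right "n - k"] assms(1,2)
    by metis
  moreover have "(?E *\<^sub>v v) $ (k + i) = v $ i" if "v \<in> carrier_vec (n - k)" "i < n - k" for v i
  proof -
    have "(?E *\<^sub>v v) $ (k + i) = (\<Sum>j = 0..<n - k. (if i = j then 1 else 0) * v $ j)"
      using that by (simp add: scalar_prod_def)
    also have "\<dots> = (\<Sum>j = 0..<n - k. if j = i then v $ j else 0)"
      by (rule sum.cong) auto
    also have "\<dots> = v $ i" using that by simp
    finally show ?thesis .
  qed
  ultimately show "x $ i = y $ i" if "i < dim_vec y" for i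
    using that assms(1,2) by (metis carrier_vecD)
qed (use assms in auto)

lemma orth_lattice_coordinates:
  assumes w: "w \<in> orth_lattice R n k A"
  defines "y \<equiv> vec (n - k) (\<lambda>i. (W *\<^sub>v w) $ (k + i))"
  shows "y \<in> vec_over R (n - k)" and "w = V_right *\<^sub>v y"
proof -
  have wR: "w \<in> vec_over R n" and wA: "conj_transpose A *\<^sub>v w = 0\<^sub>v k"
    using w orth_lattice_iff by auto
  have wc: "w \<in> carrier_vec n" using wR by (simp add: vec_over_def)
  have z: "W *\<^sub>v w \<in> vec_over R n" using unimodular_mat_over[OF unimodular_W] wR by (rule mult_mat_vec_over)
  then show "y \<in> vec_over R (n - k)" by (auto simp: y_def vec_over_def)
  have "H *\<^sub>v (W_top *\<^sub>v w) = 0\<^sub>v k"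
    using wA carriers wc by (simp add: conj_transpose_A_factor assoc_mult_mat_vec[of H k k W_top n w])
  then have "W_top *\<^sub>v w = 0\<^sub>v k"
    using det_H_nonzero det_0_iff_vec_prod_zero[OF carriers(4)] carriers wc by (metis mult_mat_vec_carrier)
  moreover have "(W *\<^sub>v w) $ c = (W_top *\<^sub>v w) $ c" if "c < k" for c
    using that k_less_n carriers wc by (simp add: W_top_def scalar_prod_def)
  ultimately have z0: "(W *\<^sub>v w) $ c = 0" if "c < k" for c
    using that by simp
  have "w = V *\<^sub>v (W *\<^sub>v w)"
    using V_W carriers wc by (simp add: assoc_mult_mat_vec[of V n n W n w, symmetric])
  also have "\<dots> = V_right *\<^sub>v y"
  proof (rule eq_vecI)
    fix r assume "r < dim_vec (V_right *\<^sub>v y)"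
    then have r: "r < n" using carriers by simp
    have "(V *\<^sub>v (W *\<^sub>v w)) $ r = (\<Sum>c\<in>{k..<n}. V $$ (r, c) * (W *\<^sub>v w) $ c)"
      using r carriers wc z0 k_less_n
      by (simp add: scalar_prod_def sum.atLeastLessThan_concat[of 0 k n, symmetric])
    also have "\<dots> = (\<Sum>i<n - k. V $$ (r, k + i) * (W *\<^sub>v w) $ (k + i))"
      using k_less_n by (intro sum.reindex_bij_witness[of _ "\<lambda>i. k + i" "\<lambda>c. c - k"]) auto
    also have "\<dots> = (V_right *\<^sub>v y) $ r"
      using r carriers by (simp add: V_right_def y_def scalar_prod_def atLeast0LessThan)
    finally show "(V *\<^sub>v (W *\<^sub>v w)) $ r = (V_right *\<^sub>v y) $ r" .
  qed (use carriers in auto)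
  finally show "w = V_right *\<^sub>v y" .
qed

lemma orth_lattice_basis: "is_R_basis R n (orth_lattice R n k A) (cols V_right)"
proof -
  have B: "mat_of_cols n (cols V_right) = V_right"
    using mat_of_cols_cols[of V_right] carriers by simp
  show ?thesis
    unfolding is_R_basis_iff[OF orth_lattice_carrier] B
  proof (intro conjI ballI cols_V_right_subset)
    fix w assume w: "w \<in> orth_lattice R n k A"
    let ?y = "vec (n - k) (\<lambda>i. (W *\<^sub>v w) $ (k + i))"
    have len: "length (cols V_right) = n - k" using carriers by simp
    show "\<exists>!y. y \<in> vec_over R (length (cols V_right)) \<and> w = V_right *\<^sub>v y"
    proof (rule ex1I[of _ ?y])
      show "?y \<in> vec_over R (length (cols V_right)) \<and> w = V_right *\<^sub>v ?y"
        using orth_lattice_coordinates[OF w] len by simp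
      fix y assume y: "y \<in> vec_over R (length (cols V_right)) \<and> w = V_right *\<^sub>v y"
      have "w = V_right *\<^sub>v y" "w = V_right *\<^sub>v ?y"
        using y orth_lattice_coordinates(2)[OF w] by blast+
      then have eq: "V_right *\<^sub>v y = V_right *\<^sub>v ?y" by (simp only:)
      have "y \<in> carrier_vec (n - k)" using y len by (simp add: vec_over_def)
      then show "y = ?y" using V_right_mult_vec_inj[OF _ vec_carrier eq] by blast
    qed
  qed
qed

lemma det_gram_cols_A: "det (gram (cols A)) = complex_of_real lam ^ k"
proof -
  have "set (cols A) \<subseteq> carrier_vec n" "mat_of_cols n (cols A) = A"
    using cols_dim[of A] mat_of_cols_cols[of A] carriers(1) by auto
  then have "gram (cols A) = complex_of_real lam \<cdot>\<^sub>m 1\<^sub>m k"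
    using gram_eq_conj_transpose_mult[of "cols A" n] conj_transpose_A_mult_A by simp
  then show ?thesis by simp
qed

lemma A_V_right_index:
  assumes "r < n" "c < n"
  shows "mat_of_cols n (cols A @ cols V_right) $$ (r, c) = (if c < k then A $$ (r, c) else V $$ (r, c))"
  using assms carriers by (auto simp: mat_of_cols_index nth_append V_right_def)

lemma W_mult_A_V_right:
  "W * mat_of_cols n (cols A @ cols V_right) =
     four_block_mat (W_top * A) (0\<^sub>m k (n - k)) (mat (n - k) k (\<lambda>(i, j). (W * A) $$ (k + i, j))) (1\<^sub>m (n - k))"
  (is "W * ?M = ?F")
proof (rule eq_matI)
  fix i c assume "i < dim_row ?F" "c < dim_col ?F"
  then have ic: "i < n" "c < n" using carriers k_less_n by auto
  have "(W * ?M) $$ (i, c) = (\<Sum>r<n. W $$ (i, r) * (if c < k then A $$ (r, c) else V $$ (r, c)))"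
    using ic carriers by (simp add: scalar_prod_def atLeast0LessThan A_V_right_index)
  also have "\<dots> = (if c < k then (W * A) $$ (i, c) else (W * V) $$ (i, c))"
    using ic carriers by (simp add: scalar_prod_def atLeast0LessThan)
  also have "\<dots> = ?F $$ (i, c)"
    using ic carriers k_less_n W_V by (auto simp: W_top_def scalar_prod_def)
  finally show "(W * ?M) $$ (i, c) = ?F $$ (i, c)" .
qed (use carriers k_less_n in auto)

lemma cols_A_orthogonal_cols_V_right:
  "\<forall>x\<in>set (cols A). \<forall>y\<in>set (cols V_right). hinner x y = 0"
proof (intro ballI)
  fix x y assume "x \<in> set (cols A)" "y \<in> set (cols V_right)"
  then obtain j where "j < k" "x = col A j"
    using carriers(1) by (metis cols_length cols_nth in_set_conv_nth carrier_matD(2))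
  then show "hinner x y = 0"
    using cols_V_right_subset \<open>y \<in> set (cols V_right)\<close> by (auto simp: orth_lattice_def)
qed

lemma norm_det_A_V_right:
  "cmod (det (mat_of_cols n (cols A @ cols V_right))) = lam ^ k / cmod (det H)"
proof -
  let ?M = "mat_of_cols n (cols A @ cols V_right)"
  have M: "?M \<in> carrier_mat n n"
    using carriers k_less_n mat_of_cols_carrier[of n "cols A @ cols V_right"] by simp
  have "det W * det ?M = det (W_top * A)"
    unfolding det_mult[OF carriers(3) M, symmetric] W_mult_A_V_right using carriers
    by (subst det_four_block_mat_upper_right_zero[of _ k]) auto
  then have "cmod (det ?M) = cmod (det (W_top * A))"
    using unimodular_det_norm[OF unimodular_W] by (metis mult_1 norm_mult)
  also have "\<dots> = lam ^ k / cmod (det H)"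
    using norm_det_H_mult det_H_nonzero by (simp add: field_simps)
  finally show ?thesis .
qed

lemma det_gram_V_right: "det (gram (cols V_right)) = complex_of_real (lam ^ k / (cmod (det H))\<^sup>2)"
proof -
  have sets: "set (cols A) \<subseteq> carrier_vec n" "set (cols V_right) \<subseteq> carrier_vec n"
    using cols_dim[of A] cols_dim[of V_right] carriers by auto
  have "complex_of_real lam ^ k * det (gram (cols V_right)) = det (gram (cols A @ cols V_right))"
    using det_gram_append_orthogonal[OF sets cols_A_orthogonal_cols_V_right] det_gram_cols_A by simp
  also have "\<dots> = complex_of_real ((cmod (det (mat_of_cols n (cols A @ cols V_right))))\<^sup>2)"
    using sets carriers k_less_n by (intro det_gram_square) auto
  also have "\<dots> = complex_of_real lam ^ k * complex_of_real (lam ^ k / (cmod (det H))\<^sup>2)"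
    unfolding norm_det_A_V_right using lam_pos det_H_nonzero by (simp add: power2_eq_square field_simps)
  finally have "complex_of_real lam ^ k * det (gram (cols V_right))
      = complex_of_real lam ^ k * complex_of_real (lam ^ k / (cmod (det H))\<^sup>2)" .
  moreover have "complex_of_real lam ^ k \<noteq> 0" using lam_pos by simp
  ultimately show ?thesis using mult_left_cancel by blast
qed

theorem orth_lattice_discriminant:
  "(\<exists>bs. length bs = n - k \<and> is_R_basis R n (orth_lattice R n k A) bs)
   \<and> (\<exists>d. is_det_divisor R k A d)
   \<and> (\<forall>bs d. is_R_basis R n (orth_lattice R n k A) bs \<longrightarrow> is_det_divisor R k A d \<longrightarrow>
        det (gram bs) = complex_of_real (lam ^ k / (cmod d)\<^sup>2))"
proof (intro conjI allI impI)
  show "\<exists>bs. length bs = n - k \<and> is_R_basis R n (orth_lattice R n k A) bs"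
    using orth_lattice_basis carriers(7) by (intro exI[of _ "cols V_right"]) simp
  show "\<exists>d. is_det_divisor R k A d" using A_mat_over by (rule det_divisor_exists)
  fix bs d assume "is_R_basis R n (orth_lattice R n k A) bs" "is_det_divisor R k A d"
  then show "det (gram bs) = complex_of_real (lam ^ k / (cmod d)\<^sup>2)"
    using det_gram_basis_invariant[OF orth_lattice_carrier orth_lattice_basis] det_gram_V_right
      norm_det_divisor by simp
qed

end

theorem mainTheorem15:
  fixes R :: "complex set" and n k :: nat and lam :: real and A0 :: "complex mat"
  assumes "R = rat_ints \<or> R = gauss_ints"
    and "1 \<le> k" and "k < n"
    and "icube R n k lam A0"
  shows "(\<exists>bs. length bs = n - k \<and> is_R_basis R n (orth_lattice R n k A0) bs)
       \<and> (\<exists>d. is_det_divisor R k A0 d)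
       \<and> (\<forall>bs d. is_R_basis R n (orth_lattice R n k A0) bs \<longrightarrow> is_det_divisor R k A0 d \<longrightarrow>
            det (gram bs) = complex_of_real (lam ^ k / (cmod d)\<^sup>2))"
proof -
  interpret euclidean_subring R
    using assms(1) euclidean_subring_rat_ints euclidean_subring_gauss_ints by blast
  have "conj_transpose A0 \<in> mat_over R k n"
    using assms(4) by (intro conj_transpose_mat_over mat_overI) (auto simp: icube_def)
  then obtain V where V: "unimodular R n V"
    and reduced: "\<forall>i<k. \<forall>c. k \<le> c \<and> c < n \<longrightarrow> (conj_transpose A0 * V) $$ (i, c) = 0"
    using column_reduction by blast
  obtain W where "unimodular R n W" "V * W = 1\<^sub>m n" "W * V = 1\<^sub>m n"
    using unimodular_inverse[OF V] by blast
  then interpret reduced_icube R n k lam A0 V W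
    using assms(3,4) V reduced by unfold_locales auto
  show ?thesis by (rule orth_lattice_discriminant)
qed

end
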